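(* Let $q$ be a prime power, $s,\ell$ positive integers, $\alpha,\beta\in\mathbb{F}_q^*$, $r$ the multiplicative order of $\beta$, and assume $q\equiv 1\pmod{r\ell}$. Let $\omega\in\mathbb{F}_q$ be a primitive $r\ell$-th root of unity with $\omega^\ell=\beta$, and $\eta_k(y)=\prod_{j\ne k,\,0\le j\le \ell-1}\frac{y-\omega^{1+jr}}{\omega^{1+kr}-\omega^{1+jr}}$ for $0\le k\le\ell-1$. Let $\mathcal{C}$ be an ideal (two-dimensional $(\alpha,\beta)$-constacyclic code) of $\mathcal{R}=\mathbb{F}_q[x,y]/\langle x^s-\alpha,y^\ell-\beta\rangle$, let $p_j(x)$ be the monic divisor of $x^s-\alpha$ generating the ideal $I_j=\{f(x)\in\mathbb{F}_q[x]/\langle x^s-\alpha\rangle:\eta_j(y)f(x)\in\mathcal{C}\}$, and $a_j=\deg p_j(x)$. Then $\dim_{\mathbb{F}_q}\mathcal{C}=s\ell-a_0-a_1-\cdots-a_{\ell-1}$.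
   Context: Elements of $\mathcal{R}$ are identified with $s\times\ell$ arrays over $\mathbb{F}_q$ via their coefficients of $x^iy^j$, $0\le i\le s-1$, $0\le j\le\ell-1$. *)

theory Defs
  imports "HOL-Computational_Algebra.Polynomial" "HOL-Library.Function_Algebras"
begin

text \<open>Elements of R = F_q[x,y]/(x^s - alpha, y^l - beta) are s x l arrays:
  functions nat => nat => 'a vanishing outside {0..<s} x {0..<l};
  entry (i,j) is the coefficient of x^i y^j.\<close>

definition R_carrier :: "nat \<Rightarrow> nat \<Rightarrow> (nat \<Rightarrow> nat \<Rightarrow> 'a::zero) set" where
  "R_carrier s l = {f. \<forall>i j. (s \<le> i \<or> l \<le> j) \<longrightarrow> f i j = 0}"

text \<open>Multiplication in R, using x^s = alpha and y^l = beta.\<close>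
definition rmult :: "nat \<Rightarrow> nat \<Rightarrow> 'a::field \<Rightarrow> 'a \<Rightarrow>
    (nat \<Rightarrow> nat \<Rightarrow> 'a) \<Rightarrow> (nat \<Rightarrow> nat \<Rightarrow> 'a) \<Rightarrow> (nat \<Rightarrow> nat \<Rightarrow> 'a)" where
  "rmult s l \<alpha> \<beta> f g = (\<lambda>i j. if i < s \<and> j < l then
     (\<Sum>i1<s. \<Sum>j1<l. \<Sum>i2<s. \<Sum>j2<l.
        (if (i1 + i2) mod s = i \<and> (j1 + j2) mod l = j
         then \<alpha> ^ ((i1 + i2) div s) * \<beta> ^ ((j1 + j2) div l) * f i1 j1 * g i2 j2
         else 0))
     else 0)"

definition is_R_ideal :: "nat \<Rightarrow> nat \<Rightarrow> 'a::field \<Rightarrow> 'a \<Rightarrow> (nat \<Rightarrow> nat \<Rightarrow> 'a) set \<Rightarrow> bool" where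
  "is_R_ideal s l \<alpha> \<beta> C \<longleftrightarrow> C \<subseteq> R_carrier s l \<and> 0 \<in> C \<and>
     (\<forall>a\<in>C. \<forall>b\<in>C. a + b \<in> C) \<and>
     (\<forall>g\<in>R_carrier s l. \<forall>a\<in>C. rmult s l \<alpha> \<beta> g a \<in> C)"

definition ascale :: "'a::field \<Rightarrow> (nat \<Rightarrow> nat \<Rightarrow> 'a) \<Rightarrow> (nat \<Rightarrow> nat \<Rightarrow> 'a)" where
  "ascale c f = (\<lambda>i j. c * f i j)"

text \<open>The element f(x) e(y) of R, for deg f < s and deg e < l.\<close>
definition biv :: "'a::comm_ring_1 poly \<Rightarrow> 'a poly \<Rightarrow> (nat \<Rightarrow> nat \<Rightarrow> 'a)" where
  "biv f e = (\<lambda>i j. coeff f i * coeff e j)"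

definition mult_order :: "'a::field \<Rightarrow> nat" where
  "mult_order b = (LEAST m. 0 < m \<and> b ^ m = 1)"

definition primitive_root :: "'a::field \<Rightarrow> nat \<Rightarrow> bool" where
  "primitive_root w n \<longleftrightarrow> 0 < n \<and> w ^ n = 1 \<and> (\<forall>m. 0 < m \<and> m < n \<longrightarrow> w ^ m \<noteq> 1)"

definition eta :: "'a::field \<Rightarrow> nat \<Rightarrow> nat \<Rightarrow> nat \<Rightarrow> 'a poly" where
  "eta w r l k = (\<Prod>j\<in>{0..<l} - {k}.
      smult (inverse (w ^ (1 + k * r) - w ^ (1 + j * r))) [:- (w ^ (1 + j * r)), 1:])"

definition xmod :: "nat \<Rightarrow> 'a::comm_ring_1 \<Rightarrow> 'a poly" where
  "xmod s \<alpha> = monom 1 s - [:\<alpha>:]"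

end

(*
  Proof idea: the nodes w_k = \<omega>^(1+kr), k < l, are l distinct roots of y^l - \<beta>.
  Substituting w_k for y sends an element a(x,y) of R to a polynomial a(x,w_k) of
  degree < s, and Lagrange interpolation recovers a = \<Sum>_k \<eta>_k(y) a(x,w_k).
  Since multiplication by \<eta>_k(y) in R is the projection a \<mapsto> \<eta>_k(y) a(x,w_k),
  every element of the ideal C splits into pieces \<eta>_k(y) f_k with f_k in I_k,
  and conversely all these pieces lie in C.  So C is the direct sum of the spaces
  \<eta>_k(y) I_k, and I_k = \<langle>p_k\<rangle> has the basis x^i p_k(x), i < s - deg p_k.
*)
theory Submission
  imports Defs
begin

section \<open>Arrays and substitution for \<open>y\<close>\<close>

lemma sum_fun_apply: "(\<Sum>x\<in>A. f x) i = (\<Sum>x\<in>A. f x i)"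
  by (induction A rule: infinite_finite_induct) auto

global_interpretation arr: vector_space "ascale :: 'a::field \<Rightarrow> (nat \<Rightarrow> nat \<Rightarrow> 'a) \<Rightarrow> _"
  by unfold_locales (auto simp: ascale_def algebra_simps fun_eq_iff)

lemma R_carrier_sum:
  "(\<And>x. x \<in> A \<Longrightarrow> f x \<in> R_carrier s l) \<Longrightarrow> (\<Sum>x\<in>A. f x) \<in> R_carrier s l"
  by (simp add: R_carrier_def sum_fun_apply)

lemma rmult_in_R_carrier: "rmult s l \<alpha> \<beta> f g \<in> R_carrier s l"
  by (simp add: R_carrier_def rmult_def)

lemma biv_in_R_carrier: "degree f < s \<Longrightarrow> degree e < l \<Longrightarrow> biv f e \<in> R_carrier s l"
  by (auto simp: biv_def R_carrier_def coeff_eq_0)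

lemma biv_smult: "biv (smult c f) e = ascale c (biv f e)"
  by (simp add: biv_def ascale_def fun_eq_iff)

lemma biv_sum: "biv (\<Sum>x\<in>A. f x) e = (\<Sum>x\<in>A. biv (f x) e)"
  by (simp add: biv_def fun_eq_iff coeff_sum sum_fun_apply sum_distrib_right)

definition eval_y :: "nat \<Rightarrow> nat \<Rightarrow> 'a::comm_ring_1 \<Rightarrow> (nat \<Rightarrow> nat \<Rightarrow> 'a) \<Rightarrow> 'a poly" where
  "eval_y s l z a = (\<Sum>i<s. monom (\<Sum>j<l. a i j * z ^ j) i)"

lemma coeff_eval_y:
  "coeff (eval_y s l z a) i = (if i < s then (\<Sum>j<l. a i j * z ^ j) else 0)"
  by (simp add: eval_y_def coeff_sum coeff_monom)

lemma degree_eval_y_less: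
  assumes "0 < s" shows "degree (eval_y s l z a) < s"
proof -
  have "degree (eval_y s l z a) \<le> s - 1" by (rule degree_le) (auto simp: coeff_eval_y)
  then show ?thesis using assms by simp
qed

lemma eval_y_sum: "eval_y s l z (\<Sum>x\<in>A. f x) = (\<Sum>x\<in>A. eval_y s l z (f x))"
  by (rule poly_eqI) (auto simp: coeff_eval_y coeff_sum sum_fun_apply sum_distrib_right intro: sum.swap)

lemma eval_y_ascale: "eval_y s l z (ascale c a) = smult c (eval_y s l z a)"
  by (rule poly_eqI) (simp add: coeff_eval_y ascale_def sum_distrib_left algebra_simps)

lemma poly_eq_sum_lessThan:
  fixes e :: "'a::comm_semiring_1 poly"
  assumes "degree e < l" shows "poly e z = (\<Sum>j<l. coeff e j * z ^ j)"
  unfolding poly_altdef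
  by (rule sum.mono_neutral_left) (use assms in \<open>auto simp: coeff_eq_0\<close>)

lemma eval_y_biv:
  "degree f < s \<Longrightarrow> degree e < l \<Longrightarrow> eval_y s l z (biv f e) = smult (poly e z) f"
  by (rule poly_eqI)
    (auto simp: coeff_eval_y biv_def poly_eq_sum_lessThan sum_distrib_left algebra_simps coeff_eq_0)

lemma rmult_biv_one_left:
  fixes e :: "'a::field poly"
  assumes "0 < s" and "i < s" and "j < l"
  shows "rmult s l \<alpha> \<beta> (biv 1 e) g i j =
    (\<Sum>j1<l. \<Sum>j2<l. if (j1 + j2) mod l = j then \<beta> ^ ((j1 + j2) div l) * coeff e j1 * g i j2 else 0)"
    (is "_ = (\<Sum>j1<l. ?K j1)")
proof -
  have summand: "(\<Sum>j2<l. if (i1 + i2) mod s = i \<and> (j1 + j2) mod l = j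
        then \<alpha> ^ ((i1 + i2) div s) * \<beta> ^ ((j1 + j2) div l) * (coeff 1 i1 * coeff e j1) * g i2 j2 else 0)
      = (if i1 = 0 \<and> i2 = i then ?K j1 else 0)" if "i1 < s" "i2 < s" for i1 i2 j1
    using that assms by (cases "i1 = 0"; cases "i2 = i") (auto cong: if_cong intro!: sum.cong)
  have "rmult s l \<alpha> \<beta> (biv 1 e) g i j = (\<Sum>i1<s. \<Sum>j1<l. \<Sum>i2<s. if i1 = 0 \<and> i2 = i then ?K j1 else 0)"
    using assms unfolding rmult_def biv_def by (simp, intro sum.cong refl) (rule summand; simp)
  also have "\<dots> = (\<Sum>i1<s. if i1 = 0 then (\<Sum>j1<l. ?K j1) else 0)"
    using assms by (intro sum.cong refl) auto
  finally show ?thesis using assms by simp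
qed

lemma power_div_mod_eq:
  fixes z :: "'a::comm_monoid_mult"
  assumes "z ^ l = \<beta>"
  shows "\<beta> ^ (m div l) * z ^ (m mod l) = z ^ m"
proof -
  have "z ^ m = z ^ (l * (m div l) + m mod l)" by simp
  then show ?thesis by (simp only: power_add power_mult assms)
qed

lemma eval_y_rmult_biv_one:
  fixes z :: "'a::field"
  assumes "0 < s" and "degree e < l" and "z ^ l = \<beta>"
  shows "eval_y s l z (rmult s l \<alpha> \<beta> (biv 1 e) g) = smult (poly e z) (eval_y s l z g)"
proof (rule poly_eqI)
  fix i
  show "coeff (eval_y s l z (rmult s l \<alpha> \<beta> (biv 1 e) g)) i = coeff (smult (poly e z) (eval_y s l z g)) i"
  proof (cases "i < s")
    case True
    have "coeff (eval_y s l z (rmult s l \<alpha> \<beta> (biv 1 e) g)) i =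
      (\<Sum>j<l. (\<Sum>j1<l. \<Sum>j2<l. if (j1 + j2) mod l = j then \<beta> ^ ((j1 + j2) div l) * coeff e j1 * g i j2 else 0) * z ^ j)"
      using True assms(1) by (simp add: coeff_eval_y rmult_biv_one_left)
    also have "\<dots> = (\<Sum>j<l. \<Sum>j1<l. \<Sum>j2<l. if (j1 + j2) mod l = j then \<beta> ^ ((j1 + j2) div l) * coeff e j1 * g i j2 * z ^ j else 0)"
      unfolding sum_distrib_right by (intro sum.cong refl) simp
    also have "\<dots> = (\<Sum>j1<l. \<Sum>j2<l. \<Sum>j<l. if (j1 + j2) mod l = j then \<beta> ^ ((j1 + j2) div l) * coeff e j1 * g i j2 * z ^ j else 0)"
      by (subst sum.swap, subst (2) sum.swap, rule refl)
    also have "\<dots> = (\<Sum>j1<l. \<Sum>j2<l. \<beta> ^ ((j1 + j2) div l) * z ^ ((j1 + j2) mod l) * (coeff e j1 * g i j2))"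
      using assms(2) by (intro sum.cong refl) (simp add: sum.delta algebra_simps)
    also have "\<dots> = (\<Sum>j1<l. \<Sum>j2<l. (coeff e j1 * z ^ j1) * (g i j2 * z ^ j2))"
      by (simp add: power_div_mod_eq[OF assms(3)] power_add algebra_simps)
    also have "\<dots> = poly e z * (\<Sum>j2<l. g i j2 * z ^ j2)"
      by (simp add: poly_eq_sum_lessThan[OF assms(2)] sum_product)
    finally show ?thesis using True by (simp add: coeff_eval_y)
  qed (simp add: coeff_eval_y)
qed

lemma R_carrier_eqI_eval_y:
  fixes a b :: "nat \<Rightarrow> nat \<Rightarrow> 'a::field"
  assumes "inj_on z {..<l}" and "a \<in> R_carrier s l" and "b \<in> R_carrier s l"
    and "\<And>k. k < l \<Longrightarrow> eval_y s l (z k) a = eval_y s l (z k) b"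
  shows "a = b"
proof (intro ext)
  fix i j
  show "a i j = b i j"
  proof (cases "i < s \<and> j < l")
    case True
    define row where "row c = (\<Sum>j<l. monom (c i j) j)" for c :: "nat \<Rightarrow> nat \<Rightarrow> 'a"
    have coeff_row: "coeff (row c) n = (if n < l then c i n else 0)" for c n
      by (simp add: row_def coeff_sum coeff_monom)
    have degree_row: "degree (row c) < l" for c
    proof -
      have "degree (row c) \<le> l - 1" by (rule degree_le) (auto simp: coeff_row)
      then show ?thesis using True by auto
    qed
    have poly_row: "poly (row c) (z k) = coeff (eval_y s l (z k) c) i" for c k
      using True by (simp add: row_def poly_sum poly_monom coeff_eval_y)
    have "row a = row b"
      by (rule poly_eqI_degree[of "z ` {..<l}"])
        (auto simp: poly_row assms(4) card_image[OF assms(1)] degree_row)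
    then have "coeff (row a) j = coeff (row b) j" by simp
    then show ?thesis using True by (simp add: coeff_row)
  qed (use assms(2,3) in \<open>auto simp: R_carrier_def\<close>)
qed

section \<open>Interpolation nodes and the Lagrange basis\<close>

lemma primitive_root_power_eq:
  assumes "primitive_root w n" and "a < n" and "b < n" and "w ^ a = w ^ b"
  shows "a = b"
proof -
  have "w \<noteq> 0" using assms(1) by (auto simp: primitive_root_def power_0_left)
  have "x = y" if "x \<le> y" "y < n" "w ^ x = w ^ y" for x y
  proof -
    have "w ^ x * w ^ (y - x) = w ^ y" using that(1) by (simp flip: power_add)
    then have "w ^ (y - x) = 1" using that(3) \<open>w \<noteq> 0\<close> by simp
    moreover have "y - x < n" using that(2) by linarith
    ultimately have "\<not> 0 < y - x" using assms(1) by (auto simp: primitive_root_def)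
    then show ?thesis using that(1) by simp
  qed
  then show ?thesis using assms(2-4) nat_le_linear by metis
qed

lemma inj_on_primitive_root_nodes:
  assumes "primitive_root \<omega> (r * l)"
  shows "inj_on (\<lambda>k. \<omega> ^ (1 + k * r)) {..<l}"
proof (rule inj_onI)
  fix k k' assume k: "k \<in> {..<l}" "k' \<in> {..<l}" and eq: "\<omega> ^ (1 + k * r) = \<omega> ^ (1 + k' * r)"
  have "\<omega> \<noteq> 0" and "0 < r" using assms by (auto simp: primitive_root_def power_0_left)
  with eq have "\<omega> ^ (k * r) = \<omega> ^ (k' * r)" by simp
  moreover have "k * r < r * l" "k' * r < r * l" using k \<open>0 < r\<close> by simp_all
  ultimately have "k * r = k' * r" using primitive_root_power_eq[OF assms] by blast
  then show "k = k'" using \<open>0 < r\<close> by simp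
qed

lemma primitive_root_node_power:
  assumes "primitive_root \<omega> (r * l)" and "\<omega> ^ l = \<beta>"
  shows "(\<omega> ^ (1 + k * r)) ^ l = \<beta>"
proof -
  have "(\<omega> ^ (1 + k * r)) ^ l = \<omega> ^ l * (\<omega> ^ (r * l)) ^ k"
    by (simp add: power_add algebra_simps flip: power_mult)
  also have "\<dots> = \<beta>" using assms by (simp add: primitive_root_def)
  finally show ?thesis .
qed

lemma degree_eta_less:
  assumes "k < l"
  shows "degree (eta \<omega> r l k) < l"
proof -
  have "degree (eta \<omega> r l k) \<le> (\<Sum>j\<in>{0..<l} - {k}. 1)"
    unfolding eta_def by (rule order.trans[OF degree_prod_sum_le sum_mono])
      (auto intro: order.trans[OF degree_smult_le])
  also have "\<dots> < l" using assms by simp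
  finally show ?thesis .
qed

lemma poly_eta:
  fixes \<omega> :: "'a::field"
  assumes "inj_on (\<lambda>k. \<omega> ^ (1 + k * r)) {..<l}" and "k < l" and "j < l"
  shows "poly (eta \<omega> r l k) (\<omega> ^ (1 + j * r)) = (if j = k then 1 else 0)"
proof -
  let ?w = "\<lambda>k. \<omega> ^ (1 + k * r)"
  have poly_eta: "poly (eta \<omega> r l k) x = (\<Prod>i\<in>{0..<l} - {k}. inverse (?w k - ?w i) * (x - ?w i))" for x
    unfolding eta_def poly_prod by (intro prod.cong refl) (simp add: algebra_simps)
  show ?thesis
  proof (cases "j = k")
    case True
    have "?w k \<noteq> ?w i" if "i \<in> {0..<l} - {k}" for i
      using that assms(1,2) by (auto dest: inj_onD)
    then show ?thesis using True by (simp add: poly_eta)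
  next
    case False
    then have "j \<in> {0..<l} - {k}" using assms(3) by simp
    then have "(\<Prod>i\<in>{0..<l} - {k}. inverse (?w k - ?w i) * (?w j - ?w i)) = 0"
      by (intro prod_zero) auto
    then show ?thesis using False by (simp only: poly_eta) simp
  qed
qed

section \<open>Dimension of an ideal\<close>

lemma degree_xmod:
  assumes "0 < s" shows "degree (xmod s \<alpha>) = s"
  unfolding xmod_def diff_conv_add_uminus
  using assms by (subst degree_add_eq_left) (simp_all add: degree_monom_eq)

lemma xmod_nonzero: "0 < s \<Longrightarrow> xmod s \<alpha> \<noteq> 0"
  using degree_xmod[of s \<alpha>] by auto

lemma mult_mod_eq_sum_monom_mult:
  fixes p X :: "'a::field poly"
  assumes "p dvd X" and "X \<noteq> 0"
  obtains c where "(g * p) mod X = (\<Sum>i<degree X - degree p. smult (c i) (monom 1 i * p))"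
proof -
  obtain d where X: "X = d * p" using assms(1) by (metis dvd_def mult.commute)
  then have "d \<noteq> 0" "p \<noteq> 0" using assms(2) by auto
  define h where "h = g mod d"
  have "degree h < degree d \<or> h = 0" using degree_mod_less[OF \<open>d \<noteq> 0\<close>] by (auto simp: h_def)
  then have "coeff h i = 0" if "degree X - degree p \<le> i" for i
    using that \<open>d \<noteq> 0\<close> \<open>p \<noteq> 0\<close> by (auto simp: X degree_mult_eq coeff_eq_0)
  then have "h = (\<Sum>i<degree X - degree p. monom (coeff h i) i)"
    by (intro poly_eqI) (auto simp: coeff_sum coeff_monom)
  then have "h * p = (\<Sum>i<degree X - degree p. monom (coeff h i) i) * p"
    by (rule arg_cong)
  also have "\<dots> = (\<Sum>i<degree X - degree p. smult (coeff h i) (monom 1 i * p))"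
    by (simp add: sum_distrib_right smult_monom flip: mult_smult_left)
  finally have "(g * p) mod X = (\<Sum>i<degree X - degree p. smult (coeff h i) (monom 1 i * p))"
    unfolding X h_def by (simp only: mod_mult_mult2)
  then show thesis by (rule that)
qed

locale constacyclic_nodes =
  fixes s l r :: nat and \<alpha> \<beta> \<omega> :: "'a::field"
  assumes s_pos: "0 < s"
    and primitive: "primitive_root \<omega> (r * l)"
    and omega_power: "\<omega> ^ l = \<beta>"
begin

definition node :: "nat \<Rightarrow> 'a" where "node k = \<omega> ^ (1 + k * r)"

abbreviation \<eta> :: "nat \<Rightarrow> 'a poly" where "\<eta> k \<equiv> eta \<omega> r l k"

lemma inj_on_node: "inj_on node {..<l}"
  unfolding node_def by (rule inj_on_primitive_root_nodes[OF primitive])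

lemma node_power: "node k ^ l = \<beta>"
  unfolding node_def by (rule primitive_root_node_power[OF primitive omega_power])

lemma poly_eta_node: "k < l \<Longrightarrow> j < l \<Longrightarrow> poly (\<eta> k) (node j) = (if j = k then 1 else 0)"
  unfolding node_def by (rule poly_eta[OF inj_on_primitive_root_nodes[OF primitive]])

lemma eval_y_node_biv_eta:
  assumes "degree f < s" and "k < l" and "j < l"
  shows "eval_y s l (node j) (biv f (\<eta> k)) = (if j = k then f else 0)"
  using assms by (simp add: eval_y_biv degree_eta_less poly_eta_node)

lemma R_carrier_eqI_nodes:
  "a \<in> R_carrier s l \<Longrightarrow> b \<in> R_carrier s l \<Longrightarrow>
    (\<And>k. k < l \<Longrightarrow> eval_y s l (node k) a = eval_y s l (node k) b) \<Longrightarrow> a = b"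
  by (rule R_carrier_eqI_eval_y[OF inj_on_node])

lemma rmult_eta:
  assumes "k < l"
  shows "rmult s l \<alpha> \<beta> (biv 1 (\<eta> k)) g = biv (eval_y s l (node k) g) (\<eta> k)"
proof (rule R_carrier_eqI_nodes)
  show "biv (eval_y s l (node k) g) (\<eta> k) \<in> R_carrier s l"
    using assms s_pos by (simp add: biv_in_R_carrier degree_eval_y_less degree_eta_less)
  fix j assume "j < l"
  then show "eval_y s l (node j) (rmult s l \<alpha> \<beta> (biv 1 (\<eta> k)) g) =
      eval_y s l (node j) (biv (eval_y s l (node k) g) (\<eta> k))"
    using assms s_pos node_power
    by (simp add: eval_y_rmult_biv_one eval_y_node_biv_eta degree_eta_less degree_eval_y_less poly_eta_node)
qed (rule rmult_in_R_carrier)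

lemma R_carrier_eq_sum_eta:
  assumes "a \<in> R_carrier s l"
  shows "a = (\<Sum>k<l. biv (eval_y s l (node k) a) (\<eta> k))"
proof (rule R_carrier_eqI_nodes[OF assms])
  show "(\<Sum>k<l. biv (eval_y s l (node k) a) (\<eta> k)) \<in> R_carrier s l"
    using s_pos by (intro R_carrier_sum biv_in_R_carrier degree_eval_y_less degree_eta_less) simp_all
  fix j assume "j < l"
  then show "eval_y s l (node j) a = eval_y s l (node j) (\<Sum>k<l. biv (eval_y s l (node k) a) (\<eta> k))"
    using s_pos by (simp add: eval_y_sum eval_y_node_biv_eta degree_eval_y_less)
qed

end

locale constacyclic_ideal = constacyclic_nodes +
  fixes C :: "(nat \<Rightarrow> nat \<Rightarrow> 'a) set"
  assumes ideal: "is_R_ideal s l \<alpha> \<beta> C"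
begin

definition component :: "nat \<Rightarrow> 'a poly set" where
  "component k = {f. degree f < s \<and> biv f (\<eta> k) \<in> C}"

lemma ideal_subset_R_carrier: "C \<subseteq> R_carrier s l"
  using ideal by (simp add: is_R_ideal_def)

lemma ideal_rmult: "g \<in> R_carrier s l \<Longrightarrow> a \<in> C \<Longrightarrow> rmult s l \<alpha> \<beta> g a \<in> C"
  using ideal by (simp add: is_R_ideal_def)

lemma eval_y_node_in_component:
  assumes "k < l" and "a \<in> C"
  shows "eval_y s l (node k) a \<in> component k"
proof -
  have "biv (eval_y s l (node k) a) (\<eta> k) = rmult s l \<alpha> \<beta> (biv 1 (\<eta> k)) a"
    using assms(1) by (rule rmult_eta[symmetric])
  also have "\<dots> \<in> C"
    using assms s_pos by (intro ideal_rmult biv_in_R_carrier degree_eta_less) simp_all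
  finally show ?thesis using s_pos by (simp add: component_def degree_eval_y_less)
qed

end

locale constacyclic_ideal_generators = constacyclic_ideal +
  fixes p :: "nat \<Rightarrow> 'a poly"
  assumes generator_nonzero: "k < l \<Longrightarrow> p k \<noteq> 0"
    and generator_dvd: "k < l \<Longrightarrow> p k dvd xmod s \<alpha>"
    and component_eq: "k < l \<Longrightarrow> component k = {(g * p k) mod xmod s \<alpha> | g. True}"
begin

definition basis_index :: "(nat \<times> nat) set" where
  "basis_index = Sigma {..<l} (\<lambda>k. {..<s - degree (p k)})"

definition basis_vec :: "nat \<times> nat \<Rightarrow> nat \<Rightarrow> nat \<Rightarrow> 'a" where
  "basis_vec = (\<lambda>(k, i). biv (monom 1 i * p k) (\<eta> k))"

lemma degree_generator_le: "k < l \<Longrightarrow> degree (p k) \<le> s"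
  using dvd_imp_degree_le[OF generator_dvd xmod_nonzero[OF s_pos]] by (simp add: degree_xmod[OF s_pos])

lemma degree_monom_mult_generator:
  assumes "i < s - degree (p k)" shows "degree (monom 1 i * p k) < s"
proof -
  have "degree (monom 1 i * p k) \<le> i + degree (p k)"
    using degree_mult_le[of "monom 1 i" "p k"] degree_monom_le[of "1::'a" i] by linarith
  then show ?thesis using assms by arith
qed

lemma eval_y_node_basis_vec:
  assumes "(k, i) \<in> basis_index" and "j < l"
  shows "eval_y s l (node j) (basis_vec (k, i)) = (if j = k then monom 1 i * p k else 0)"
  using assms by (simp add: basis_index_def basis_vec_def eval_y_node_biv_eta degree_monom_mult_generator)

lemma eval_y_node_basis_combination:
  assumes "j < l"
  shows "eval_y s l (node j) (\<Sum>\<kappa>\<in>basis_index. ascale (u \<kappa>) (basis_vec \<kappa>))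
    = (\<Sum>i<s - degree (p j). monom (u (j, i)) i) * p j"
proof -
  have "eval_y s l (node j) (\<Sum>\<kappa>\<in>basis_index. ascale (u \<kappa>) (basis_vec \<kappa>))
      = (\<Sum>\<kappa>\<in>basis_index. smult (u \<kappa>) (eval_y s l (node j) (basis_vec \<kappa>)))"
    by (simp add: eval_y_sum eval_y_ascale)
  also have "\<dots> = (\<Sum>k<l. \<Sum>i<s - degree (p k). smult (u (k, i)) (eval_y s l (node j) (basis_vec (k, i))))"
    unfolding basis_index_def by (subst sum.Sigma) (auto simp: split_def)
  also have "\<dots> = (\<Sum>k<l. if j = k then (\<Sum>i<s - degree (p k). smult (u (k, i)) (monom 1 i * p k)) else 0)"
    using assms by (intro sum.cong refl) (auto simp: eval_y_node_basis_vec basis_index_def)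
  also have "\<dots> = (\<Sum>i<s - degree (p j). monom (u (j, i)) i) * p j"
    using assms by (simp add: sum_distrib_right smult_monom flip: mult_smult_left)
  finally show ?thesis .
qed

lemma inj_on_basis_vec: "inj_on basis_vec basis_index"
proof (rule inj_onI)
  fix \<kappa> \<kappa>' assume "\<kappa> \<in> basis_index" "\<kappa>' \<in> basis_index" and eq: "basis_vec \<kappa> = basis_vec \<kappa>'"
  then obtain k i k' i' where \<kappa>: "\<kappa> = (k, i)" "\<kappa>' = (k', i')" "(k, i) \<in> basis_index" "(k', i') \<in> basis_index"
    by (cases \<kappa>, cases \<kappa>') auto
  then have "k < l" by (simp add: basis_index_def)
  have "monom 1 i * p k = (if k = k' then monom 1 i' * p k' else 0)"
    using eval_y_node_basis_vec[OF \<kappa>(3) \<open>k < l\<close>] eval_y_node_basis_vec[OF \<kappa>(4) \<open>k < l\<close>] eq \<kappa>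
    by (simp split: if_splits)
  moreover have "p k \<noteq> 0" using generator_nonzero[OF \<open>k < l\<close>] .
  ultimately have "k = k'" and "monom (1::'a) i = monom 1 i'"
    by (auto split: if_splits)
  then show "\<kappa> = \<kappa>'" using \<kappa> by (metis coeff_monom one_neq_zero)
qed

lemma card_basis: "card (basis_vec ` basis_index) = (\<Sum>k<l. s - degree (p k))"
  using card_image[OF inj_on_basis_vec] by (simp add: basis_index_def)

lemma basis_subset_ideal: "basis_vec ` basis_index \<subseteq> C"
proof clarify
  fix k i assume "(k, i) \<in> basis_index"
  then have "k < l" and deg: "degree (monom 1 i * p k) < s"
    by (auto simp: basis_index_def degree_monom_mult_generator)
  have "monom 1 i * p k = (monom 1 i * p k) mod xmod s \<alpha>"
    using deg by (simp add: mod_poly_less degree_xmod[OF s_pos])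
  then have "monom 1 i * p k \<in> component k"
    using component_eq[OF \<open>k < l\<close>] by blast
  then show "basis_vec (k, i) \<in> C" by (simp add: component_def basis_vec_def)
qed

lemma basis_independent: "\<not> arr.dependent (basis_vec ` basis_index)"
proof
  assume "arr.dependent (basis_vec ` basis_index)"
  then obtain u where u: "\<exists>v\<in>basis_vec ` basis_index. u v \<noteq> 0"
    "(\<Sum>v\<in>basis_vec ` basis_index. ascale (u v) v) = 0"
    by (auto simp: arr.dependent_finite basis_index_def)
  have "u (basis_vec \<kappa>) = 0" if "\<kappa> \<in> basis_index" for \<kappa>
  proof -
    obtain j i where \<kappa>: "\<kappa> = (j, i)" by (cases \<kappa>)
    with that have j: "j < l" and i: "i < s - degree (p j)" by (auto simp: basis_index_def)
    have "(\<Sum>\<kappa>\<in>basis_index. ascale (u (basis_vec \<kappa>)) (basis_vec \<kappa>)) = 0"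
      using u(2) by (simp add: sum.reindex[OF inj_on_basis_vec])
    then have "(\<Sum>i<s - degree (p j). monom (u (basis_vec (j, i))) i) * p j = 0"
      using eval_y_node_basis_combination[OF j, of "\<lambda>\<kappa>. u (basis_vec \<kappa>)"] by (simp add: eval_y_def)
    then have "(\<Sum>i<s - degree (p j). monom (u (basis_vec (j, i))) i) = 0"
      using generator_nonzero[OF j] by simp
    then have "coeff (\<Sum>i<s - degree (p j). monom (u (basis_vec (j, i))) i) i = 0" by simp
    then show ?thesis using i \<kappa> by (simp add: coeff_sum coeff_monom)
  qed
  moreover obtain \<kappa> where "\<kappa> \<in> basis_index" and "u (basis_vec \<kappa>) \<noteq> 0"
    using u(1) by blast
  ultimately show False by blast
qed

lemma component_subset_span:
  assumes "k < l" and "f \<in> component k"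
  shows "biv f (\<eta> k) \<in> arr.span (basis_vec ` basis_index)"
proof -
  obtain g where "f = (g * p k) mod xmod s \<alpha>" using assms component_eq by blast
  moreover obtain c where "(g * p k) mod xmod s \<alpha> =
      (\<Sum>i<degree (xmod s \<alpha>) - degree (p k). smult (c i) (monom 1 i * p k))"
    by (rule mult_mod_eq_sum_monom_mult[OF generator_dvd[OF assms(1)] xmod_nonzero[OF s_pos]])
  ultimately have "biv f (\<eta> k) = (\<Sum>i<s - degree (p k). ascale (c i) (basis_vec (k, i)))"
    by (simp add: biv_sum biv_smult basis_vec_def degree_xmod[OF s_pos])
  also have "\<dots> \<in> arr.span (basis_vec ` basis_index)"
    using assms(1) by (intro arr.span_sum arr.span_scale arr.span_base) (auto simp: basis_index_def)
  finally show ?thesis .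
qed

lemma ideal_subset_span: "C \<subseteq> arr.span (basis_vec ` basis_index)"
proof
  fix a assume "a \<in> C"
  then have "a = (\<Sum>k<l. biv (eval_y s l (node k) a) (\<eta> k))"
    using ideal_subset_R_carrier by (intro R_carrier_eq_sum_eta) auto
  also have "\<dots> \<in> arr.span (basis_vec ` basis_index)"
    using \<open>a \<in> C\<close> by (intro arr.span_sum component_subset_span eval_y_node_in_component) auto
  finally show "a \<in> arr.span (basis_vec ` basis_index)" .
qed

theorem dim_ideal: "arr.dim C = (\<Sum>k<l. s - degree (p k))"
  by (rule arr.dim_unique[OF basis_subset_ideal ideal_subset_span basis_independent card_basis])

end

theorem mainTheorem3:
  fixes \<alpha> \<beta> \<omega> :: "'a::{field,finite}"
    and s l r :: nat
    and C :: "(nat \<Rightarrow> nat \<Rightarrow> 'a) set"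
    and p :: "nat \<Rightarrow> 'a poly"
  assumes "0 < s" and "0 < l"
    and "\<alpha> \<noteq> 0" and "\<beta> \<noteq> 0"
    and "r = mult_order \<beta>"
    and "r * l dvd card (UNIV :: 'a set) - 1"
    and "primitive_root \<omega> (r * l)" and "\<omega> ^ l = \<beta>"
    and "is_R_ideal s l \<alpha> \<beta> C"
    and "\<And>j. j < l \<Longrightarrow> lead_coeff (p j) = 1 \<and> p j dvd xmod s \<alpha> \<and>
           {f. degree f < s \<and> biv f (eta \<omega> r l j) \<in> C} =
           {(g * p j) mod xmod s \<alpha> | g. True}"
  shows "vector_space.dim ascale C = s * l - (\<Sum>j<l. degree (p j))"
proof -
  \<comment> \<open>Besides \<open>0 < s\<close>, only primitivity of \<open>\<omega>\<close> and \<open>\<omega>\<^sup>l = \<beta>\<close> enter the proof,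
      and of the monicity of \<open>p j\<close> only \<open>p j \<noteq> 0\<close>.\<close>
  interpret constacyclic_ideal s l r \<alpha> \<beta> \<omega> C
    using assms(1,7-9) by unfold_locales
  interpret constacyclic_ideal_generators s l r \<alpha> \<beta> \<omega> C p
    by unfold_locales (use assms(10) in \<open>force simp: component_def\<close>)+
  have "arr.dim C = (\<Sum>k<l. s - degree (p k))"
    by (rule dim_ideal)
  also have "\<dots> = (\<Sum>k<l. s) - (\<Sum>k<l. degree (p k))"
    by (rule sum_subtractf_nat) (simp add: degree_generator_le)
  also have "\<dots> = s * l - (\<Sum>k<l. degree (p k))"
    by (simp add: mult.commute)
  finally show ?thesis .
qed

end
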